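(* Let $x,y\in\mathcal{X}$, let $R'$ be a ranking with $xR'y$, and let $\mathrel{W}$ be a tournament that agrees with $R'$ on every pair $\{z,w\}\nsubseteq[x,y]_{R'}$. Then the outcome under $\mathrel{W}$ of any strategy agrees with $R'$ on every pair $\{z,w\}\nsubseteq[x,y]_{R'}$.
   Context: Let $\mathcal{X}$ be a finite set of alternatives. A proto-ranking is an irreflexive and transitive binary relation on $\mathcal{X}$; a ranking is a total proto-ranking; a tournament is a total and asymmetric binary relation on $\mathcal{X}$. Two relations agree on a pair $\{z,w\}$ if they relate $z$ and $w$ in the same direction. For $xR'y$, $[x,y]_{R'}=\{x,y\}\cup\{c: xR'cR'y\}$. Interaction: given a tournament $\mathrel{W}$, start from $R_0=\varnothing$; in each period with $R_{t-1}$ not total a chair offers a pair $\{u,v\}$ of distinct alternatives unranked by $R_{t-1}$, the winner is $u$ if $u\mathrel{W}v$ and $v$ otherwise, and $R_t$ is the transitive closure of $R_{t-1}\cup\{(\text{winner},\text{loser})\}$; stop when $R_t$ is total. A strategy assigns to each non-terminal history (sequence of (winner, loser) pairs) a pair unranked at it; its outcome under $\mathrel{W}$ is the final ranking. *)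

theory Defs
  imports Main
begin

definition proto_ranking :: "'a set \<Rightarrow> 'a rel \<Rightarrow> bool" where
  "proto_ranking X R \<longleftrightarrow> R \<subseteq> X \<times> X \<and> irrefl R \<and> trans R"

definition ranking :: "'a set \<Rightarrow> 'a rel \<Rightarrow> bool" where
  "ranking X R \<longleftrightarrow> proto_ranking X R \<and> total_on X R"

definition tournament :: "'a set \<Rightarrow> 'a rel \<Rightarrow> bool" where
  "tournament X W \<longleftrightarrow> W \<subseteq> X \<times> X \<and> total_on X W \<and> asym W"

definition agree_on_pair :: "'a rel \<Rightarrow> 'a rel \<Rightarrow> 'a \<Rightarrow> 'a \<Rightarrow> bool" where
  "agree_on_pair R1 R2 z w \<longleftrightarrow>
     ((z, w) \<in> R1 \<longleftrightarrow> (z, w) \<in> R2) \<and> ((w, z) \<in> R1 \<longleftrightarrow> (w, z) \<in> R2)"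

definition interval :: "'a rel \<Rightarrow> 'a \<Rightarrow> 'a \<Rightarrow> 'a set" where
  "interval R x y = {x, y} \<union> {c. (x, c) \<in> R \<and> (c, y) \<in> R}"

(* histories: lists of (winner, loser) pairs; the relation R_t at a history *)
definition rel_of :: "('a \<times> 'a) list \<Rightarrow> 'a rel" where
  "rel_of h = trancl (set h)"

definition unranked :: "'a set \<Rightarrow> 'a rel \<Rightarrow> 'a \<times> 'a \<Rightarrow> bool" where
  "unranked X R p \<longleftrightarrow> fst p \<in> X \<and> snd p \<in> X \<and> fst p \<noteq> snd p
     \<and> (fst p, snd p) \<notin> R \<and> (snd p, fst p) \<notin> R"

definition terminal :: "'a set \<Rightarrow> ('a \<times> 'a) list \<Rightarrow> bool" where
  "terminal X h \<longleftrightarrow> total_on X (rel_of h)"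

inductive history :: "'a set \<Rightarrow> ('a \<times> 'a) list \<Rightarrow> bool" for X where
  Nil: "history X []"
| Step: "history X h \<Longrightarrow> \<not> terminal X h \<Longrightarrow> unranked X (rel_of h) (u, v) \<Longrightarrow>
         history X (h @ [(u, v)])"

definition strategy :: "'a set \<Rightarrow> (('a \<times> 'a) list \<Rightarrow> 'a \<times> 'a) \<Rightarrow> bool" where
  "strategy X \<sigma> \<longleftrightarrow> (\<forall>h. history X h \<and> \<not> terminal X h \<longrightarrow> unranked X (rel_of h) (\<sigma> h))"

definition winner_loser :: "'a rel \<Rightarrow> 'a \<times> 'a \<Rightarrow> 'a \<times> 'a" where
  "winner_loser W p = (if (fst p, snd p) \<in> W then (fst p, snd p) else (snd p, fst p))"

definition play_step :: "'a set \<Rightarrow> (('a \<times> 'a) list \<Rightarrow> 'a \<times> 'a) \<Rightarrow> 'a rel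
    \<Rightarrow> ('a \<times> 'a) list \<Rightarrow> ('a \<times> 'a) list" where
  "play_step X \<sigma> W h = (if terminal X h then h else h @ [winner_loser W (\<sigma> h)])"

definition play :: "'a set \<Rightarrow> (('a \<times> 'a) list \<Rightarrow> 'a \<times> 'a) \<Rightarrow> 'a rel \<Rightarrow> nat \<Rightarrow> ('a \<times> 'a) list" where
  "play X \<sigma> W n = (play_step X \<sigma> W ^^ n) []"

definition outcome :: "'a set \<Rightarrow> (('a \<times> 'a) list \<Rightarrow> 'a \<times> 'a) \<Rightarrow> 'a rel \<Rightarrow> 'a rel" where
  "outcome X \<sigma> W = rel_of (play X \<sigma> W (LEAST n. terminal X (play X \<sigma> W n)))"

end

theory Submission
  imports Defs
begin

text \<open>
  Let \<open>I = interval R' x y\<close>. Since \<open>I\<close> is \<open>R'\<close>-convex, the relation \<open>R' \<union> I \<times> I\<close>, which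
  collapses \<open>I\<close> into a single block, is transitive. Every match played under \<open>W\<close> is won
  in accordance with this relation: inside \<open>I\<close> trivially, elsewhere because \<open>W\<close> agrees with
  \<open>R'\<close>. Hence the outcome, the transitive closure of the match results, is contained in
  \<open>R' \<union> I \<times> I\<close>. Since the outcome is total and \<open>R'\<close> is asymmetric, the outcome
  coincides with \<open>R'\<close> on every pair not contained in \<open>I\<close>.
\<close>

lemma trans_Un_Times_convex:
  assumes "trans R" and "total_on X R" and "R \<subseteq> X \<times> X" and "I \<subseteq> X"
    and convex: "\<And>a b c. a \<in> I \<Longrightarrow> b \<in> I \<Longrightarrow> (a, c) \<in> R \<Longrightarrow> (c, b) \<in> R \<Longrightarrow> c \<in> I"
  shows "trans (R \<union> I \<times> I)"
proof -
  have below: "(a, c) \<in> R" if "a \<notin> I" "(a, b) \<in> R" "b \<in> I" "c \<in> I" for a b c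
  proof -
    have "a \<in> X" "c \<in> X" "a \<noteq> c" using that \<open>R \<subseteq> X \<times> X\<close> \<open>I \<subseteq> X\<close> by auto
    moreover have "(c, a) \<notin> R" using convex[of c b a] that by blast
    ultimately show ?thesis using \<open>total_on X R\<close> by (auto simp: total_on_def)
  qed
  have above: "(a, c) \<in> R" if "c \<notin> I" "(b, c) \<in> R" "a \<in> I" "b \<in> I" for a b c
  proof -
    have "a \<in> X" "c \<in> X" "a \<noteq> c" using that \<open>R \<subseteq> X \<times> X\<close> \<open>I \<subseteq> X\<close> by auto
    moreover have "(c, a) \<notin> R" using convex[of b a c] that by blast
    ultimately show ?thesis using \<open>total_on X R\<close> by (auto simp: total_on_def)
  qed
  show ?thesis
    using \<open>trans R\<close> below above unfolding trans_def by blast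
qed

lemma interval_subset:
  assumes "R \<subseteq> X \<times> X" and "(x, y) \<in> R"
  shows "interval R x y \<subseteq> X"
  using assms by (auto simp: interval_def)

lemma interval_convex:
  assumes "trans R" and "(x, y) \<in> R"
    and "a \<in> interval R x y" and "b \<in> interval R x y" and "(a, c) \<in> R" and "(c, b) \<in> R"
  shows "c \<in> interval R x y"
proof -
  have "(x, c) \<in> R" using assms unfolding interval_def by (auto dest: transD)
  moreover have "(c, y) \<in> R" using assms unfolding interval_def by (auto dest: transD)
  ultimately show ?thesis by (simp add: interval_def)
qed

lemma trans_ranking_Un_interval:
  assumes "ranking X R" and "(x, y) \<in> R"
  shows "trans (R \<union> interval R x y \<times> interval R x y)"
proof (rule trans_Un_Times_convex)
  show "trans R" "total_on X R" "R \<subseteq> X \<times> X"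
    using \<open>ranking X R\<close> by (auto simp: ranking_def proto_ranking_def)
  show "interval R x y \<subseteq> X"
    using \<open>R \<subseteq> X \<times> X\<close> \<open>(x, y) \<in> R\<close> by (rule interval_subset)
  show "c \<in> interval R x y"
    if "a \<in> interval R x y" "b \<in> interval R x y" "(a, c) \<in> R" "(c, b) \<in> R" for a b c
    using \<open>trans R\<close> \<open>(x, y) \<in> R\<close> that by (rule interval_convex)
qed

lemma asym_ranking:
  assumes "ranking X R"
  shows "asym R"
  using assms asym_on_iff_irrefl_on_if_trans_on[of UNIV R]
  by (simp add: ranking_def proto_ranking_def)

lemma agree_on_pair_if_total_on_subset_Un_Times:
  assumes "asym R" and "total_on X Q" and "Q \<subseteq> R \<union> I \<times> I"
    and "z \<in> X" and "w \<in> X" and "\<not> {z, w} \<subseteq> I"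
  shows "agree_on_pair Q R z w"
proof -
  have in_R: "(a, b) \<in> R" if "(a, b) \<in> Q" "{a, b} = {z, w}" for a b
    using that \<open>Q \<subseteq> R \<union> I \<times> I\<close> \<open>\<not> {z, w} \<subseteq> I\<close> by auto
  have in_Q: "(a, b) \<in> Q" if "(a, b) \<in> R" "{a, b} = {z, w}" for a b
  proof -
    have "a \<noteq> b" using \<open>asym R\<close> that(1) by (auto dest: asymD)
    moreover have "(b, a) \<notin> Q" using in_R[of b a] that \<open>asym R\<close> by (auto dest: asymD)
    moreover have "a \<in> X" "b \<in> X"
      using that(2) \<open>z \<in> X\<close> \<open>w \<in> X\<close> by (auto simp: doubleton_eq_iff)
    ultimately show ?thesis
      using \<open>total_on X Q\<close> by (auto simp: total_on_def)
  qed
  show ?thesis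
    unfolding agree_on_pair_def using in_R in_Q by blast
qed

lemma winner_loser_cases:
  "winner_loser W (u, v) = (u, v) \<or> winner_loser W (u, v) = (v, u)"
  by (simp add: winner_loser_def)

lemma winner_loser_in_tournament:
  assumes "total_on X W" and "u \<in> X" and "v \<in> X" and "u \<noteq> v"
  shows "winner_loser W (u, v) \<in> W"
  using assms by (auto simp: winner_loser_def total_on_def)

lemma unranked_winner_loser:
  assumes "unranked X R p"
  shows "unranked X R (winner_loser W p)"
  using assms by (auto simp: unranked_def winner_loser_def)

lemma play_0: "play X \<sigma> W 0 = []"
  by (simp add: play_def)

lemma play_Suc:
  "play X \<sigma> W (Suc n) =
     (if terminal X (play X \<sigma> W n) then play X \<sigma> W n
      else play X \<sigma> W n @ [winner_loser W (\<sigma> (play X \<sigma> W n))])"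
  by (simp add: play_def play_step_def)

lemma unranked_strategy_play:
  assumes "strategy X \<sigma>" and "history X (play X \<sigma> W n)" and "\<not> terminal X (play X \<sigma> W n)"
  shows "unranked X (rel_of (play X \<sigma> W n)) (winner_loser W (\<sigma> (play X \<sigma> W n)))"
proof -
  have "unranked X (rel_of (play X \<sigma> W n)) (\<sigma> (play X \<sigma> W n))"
    using assms unfolding strategy_def by blast
  then show ?thesis by (rule unranked_winner_loser)
qed

lemma history_play:
  assumes "strategy X \<sigma>"
  shows "history X (play X \<sigma> W n)"
proof (induction n)
  case 0
  then show ?case by (simp add: play_0 history.Nil)
next
  case (Suc n)
  then show ?case
    using unranked_strategy_play[OF assms] history.Step prod.collapse
    by (metis play_Suc)
qed

lemma set_play_subset:
  assumes "strategy X \<sigma>"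
    and "\<And>u v. u \<in> X \<Longrightarrow> v \<in> X \<Longrightarrow> u \<noteq> v \<Longrightarrow> winner_loser W (u, v) \<in> T"
  shows "set (play X \<sigma> W n) \<subseteq> T"
proof (induction n)
  case 0
  then show ?case by (simp add: play_0)
next
  case (Suc n)
  let ?h = "play X \<sigma> W n"
  show ?case
  proof (cases "terminal X ?h")
    case False
    obtain u v where uv: "\<sigma> ?h = (u, v)" by fastforce
    have "unranked X (rel_of ?h) (\<sigma> ?h)"
      using assms(1) history_play[OF assms(1)] False unfolding strategy_def by blast
    then have "u \<in> X" "v \<in> X" "u \<noteq> v" using uv by (simp_all add: unranked_def)
    then have "winner_loser W (\<sigma> ?h) \<in> T" using uv assms(2) by simp
    with Suc.IH False show ?thesis by (simp add: play_Suc)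
  qed (use Suc.IH in \<open>simp add: play_Suc\<close>)
qed

lemma rel_of_subset:
  assumes "history X h"
  shows "rel_of h \<subseteq> X \<times> X"
proof -
  have "set h \<subseteq> X \<times> X"
    using assms by (induction rule: history.induct) (auto simp: unranked_def)
  then show ?thesis
    unfolding rel_of_def by (rule trancl_subset_Sigma)
qed

lemma rel_of_play_psubset:
  assumes "strategy X \<sigma>" and "\<not> terminal X (play X \<sigma> W n)"
  shows "rel_of (play X \<sigma> W n) \<subset> rel_of (play X \<sigma> W (Suc n))"
proof -
  let ?h = "play X \<sigma> W n"
  obtain a b where ab: "winner_loser W (\<sigma> ?h) = (a, b)" by fastforce
  then have "(a, b) \<notin> rel_of ?h"
    using unranked_strategy_play[OF assms(1) history_play[OF assms(1)] assms(2)]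
    by (simp add: unranked_def)
  moreover have "play X \<sigma> W (Suc n) = ?h @ [(a, b)]"
    using assms(2) ab by (simp add: play_Suc)
  ultimately show ?thesis
    unfolding rel_of_def by (auto intro: trancl_mono)
qed

lemma play_terminates:
  assumes "finite X" and "strategy X \<sigma>"
  shows "\<exists>n. terminal X (play X \<sigma> W n)"
proof (rule ccontr)
  assume never: "\<not> (\<exists>n. terminal X (play X \<sigma> W n))"
  have finite_rel: "finite (rel_of (play X \<sigma> W n))" for n
    using rel_of_subset[OF history_play[OF assms(2)]] assms(1) by (meson finite_SigmaI finite_subset)
  have growth: "n \<le> card (rel_of (play X \<sigma> W n))" for n
  proof (induction n)
    case (Suc n)
    have "card (rel_of (play X \<sigma> W n)) < card (rel_of (play X \<sigma> W (Suc n)))"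
      using rel_of_play_psubset[OF assms(2)] never finite_rel by (meson psubset_card_mono)
    with Suc.IH show ?case by simp
  qed simp
  have "card (rel_of (play X \<sigma> W n)) \<le> card (X \<times> X)" for n
    using rel_of_subset[OF history_play[OF assms(2)]] assms(1) by (meson card_mono finite_SigmaI)
  with growth[of "Suc (card (X \<times> X))"] show False by (meson not_less_eq_eq)
qed

lemma total_on_outcome:
  assumes "finite X" and "strategy X \<sigma>"
  shows "total_on X (outcome X \<sigma> W)"
  using LeastI_ex[OF play_terminates[OF assms]]
  by (simp add: outcome_def terminal_def)

lemma outcome_subset:
  assumes "strategy X \<sigma>" and "trans T"
    and "\<And>u v. u \<in> X \<Longrightarrow> v \<in> X \<Longrightarrow> u \<noteq> v \<Longrightarrow> winner_loser W (u, v) \<in> T"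
  shows "outcome X \<sigma> W \<subseteq> T"
  using set_play_subset[OF assms(1,3)] trancl_mono trancl_id[OF \<open>trans T\<close>]
  unfolding outcome_def rel_of_def by blast

theorem lemma3:
  fixes X :: "'a set" and R' W :: "'a rel" and x y :: 'a
    and \<sigma> :: "('a \<times> 'a) list \<Rightarrow> 'a \<times> 'a"
  assumes "finite X"
    and "ranking X R'"
    and "(x, y) \<in> R'"
    and "tournament X W"
    and "\<forall>z\<in>X. \<forall>w\<in>X. \<not> {z, w} \<subseteq> interval R' x y \<longrightarrow> agree_on_pair W R' z w"
    and "strategy X \<sigma>"
  shows "\<forall>z\<in>X. \<forall>w\<in>X. \<not> {z, w} \<subseteq> interval R' x y \<longrightarrow> agree_on_pair (outcome X \<sigma> W) R' z w"
proof -
  let ?I = "interval R' x y"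
  have match_result: "winner_loser W (u, v) \<in> R' \<union> ?I \<times> ?I"
    if "u \<in> X" "v \<in> X" "u \<noteq> v" for u v
  proof (cases "{u, v} \<subseteq> ?I")
    case False
    then have "agree_on_pair W R' u v" using assms(5) that(1,2) by blast
    moreover have "winner_loser W (u, v) \<in> W"
      using assms(4) that by (intro winner_loser_in_tournament[of X]) (auto simp: tournament_def)
    ultimately show ?thesis
      using winner_loser_cases[of W u v] by (auto simp: agree_on_pair_def)
  qed (use winner_loser_cases[of W u v] in auto)
  have "outcome X \<sigma> W \<subseteq> R' \<union> ?I \<times> ?I"
    using assms(6) trans_ranking_Un_interval[OF assms(2,3)] match_result by (rule outcome_subset)
  then show ?thesis
    using asym_ranking[OF assms(2)] total_on_outcome[OF assms(1,6)]
    by (blast intro: agree_on_pair_if_total_on_subset_Un_Times)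
qed

end
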